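(* Let $c_b=\sum_{a=b+1}^{2b}|c_{a,b}|$. There is a constant $C_3<\infty$ such that $c_b\le C_3^b\, b!$ for all $b\ge1$.
   Context: The $c_{a,b}$, $(a,b)\in I=\{b\ge1,\ b+1\le a\le 2b\}$, are the lace-expansion coefficients for self-avoiding walk on $\mathbb Z^d$ (with memory $\tau\ge a$): let $f_\tau(a,N,D)$ be the number of equivalence classes, under the $2^D D!$ signed coordinate permutations of $\mathbb Z^D$, of memory-$\tau$ lace graphs of length $a$, type $N$ and dimensionality exactly $D$ (lace graphs are nearest-neighbour walks with additional structure as in the Brydges–Spencer lace expansion; the set of lace graphs is invariant under lattice symmetries, there are at most $(2D)^a$ lace graphs of length $a$ in $\mathbb Z^D$ in total over all types, and a lace graph of dimensionality $D$ has length at least $2D$). With $s=1/(2d)$, $c_{a,b,N}$ is defined by $\sum_{D=1}^{\lfloor a/2\rfloor}f_\tau(a,N,D)\,2d(2d-2)\cdots(2d-2D+2)=\sum_{b=\lceil a/2\rceil}^{a-1}c_{a,b,N}s^{b-a}$, and $c_{a,b}=\sum_{N\ge1}(-1)^{N+1}c_{a,b,N}$. *)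

theory Defs
  imports Main "HOL-Combinatorics.Permutations" "HOL-Computational_Algebra.Polynomial"
begin

text \<open>A lace graph of length a is modelled as a pair (extra structure, walk), where the
walk is a nearest-neighbour walk from the origin given by its list of steps; a step
is (coordinate index, True = positive direction / False = negative direction).
Coordinates range over nat, so a walk lies in Z^D iff all its coordinates are < D.\<close>

type_synonym 'g lgraph = "'g \<times> (nat \<times> bool) list"

definition coords :: "'g lgraph \<Rightarrow> nat set" where
  "coords x = fst ` set (snd x)"

definition dimensionality :: "'g lgraph \<Rightarrow> nat" where
  "dimensionality x = card (coords x)"

definition act :: "(nat \<Rightarrow> nat) \<Rightarrow> (nat \<Rightarrow> bool) \<Rightarrow> 'g lgraph \<Rightarrow> 'g lgraph" where
  "act p e x = (fst x, map (\<lambda>(i, sg). (p i, sg \<noteq> e i)) (snd x))"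

definition sperm_rel :: "nat \<Rightarrow> 'g lgraph set \<Rightarrow> ('g lgraph \<times> 'g lgraph) set" where
  "sperm_rel D A = {(x, y). x \<in> A \<and> y \<in> A \<and>
      (\<exists>p e. p permutes {..<D} \<and> y = act p e x)}"

text \<open>f(a,N,D): number of equivalence classes of lace graphs of length a, type N and
dimensionality exactly D in Z^D.\<close>
definition lace_f :: "(nat \<Rightarrow> nat \<Rightarrow> 'g lgraph set) \<Rightarrow> nat \<Rightarrow> nat \<Rightarrow> nat \<Rightarrow> nat" where
  "lace_f LG a N D =
     (let A = {x \<in> LG a N. coords x = {..<D}} in card (A // sperm_rel D A))"

text \<open>c_{a,b,N}: with x = 1/s = 2d, 2d(2d-2)...(2d-2D+2) = prod_{j<D} (x - 2j), and
c_{a,b,N} is the coefficient of x^(a-b) = s^(b-a) in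
sum_{D=1}^{floor(a/2)} f(a,N,D) prod_{j<D}(x - 2j).\<close>
definition lace_c :: "(nat \<Rightarrow> nat \<Rightarrow> 'g lgraph set) \<Rightarrow> nat \<Rightarrow> nat \<Rightarrow> nat \<Rightarrow> int" where
  "lace_c LG a b N =
     coeff (\<Sum>D\<in>{1..a div 2}. of_nat (lace_f LG a N D) *
              (\<Prod>j<D. [:- 2 * of_nat j, 1:])) (a - b)"

definition lace_cab :: "(nat \<Rightarrow> nat \<Rightarrow> 'g lgraph set) \<Rightarrow> nat \<Rightarrow> nat \<Rightarrow> int" where
  "lace_cab LG a b =
     (\<Sum>N\<in>{N. 1 \<le> N \<and> lace_c LG a b N \<noteq> 0}. (-1) ^ (N + 1) * lace_c LG a b N)"

end

theory Submission
  imports Defs Complex_Main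
begin

(* Write Q_D = x(x-2)...(x-2D+2), so that c_{a,b,N} = sum_D f(a,N,D) [x^(a-b)] Q_D.
   Three independent estimates combine into the bound:
   (1) Orbit counting.  On lace graphs whose coordinate set is exactly {..<D} the 2^D D! signed
       coordinate permutations act freely, so every equivalence class has 2^D D! elements.
       Together with the global count (2D)^a this gives  sum_N f(a,N,D) * 2^D D! <= (2D)^a.
   (2) Coefficients of Q_D:  |[x^m] Q_D| <= (D choose m) (2D)^(D-m), by induction on D.
   (3) Stirling-type estimate n^n <= e^n n!.
   For D <= b < a <= 2b these give  |[x^(a-b)] Q_D| (2D)^a / (2^D D!) <= (4e^2)^b b!,
   hence |c_{a,b}| <= b (4e^2)^b b!, and summing over the b values of a yields
   c_b <= b^2 (4e^2)^b b! <= (16 e^2)^b b!. *)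

section \<open>Signed coordinate permutations\<close>

definition sign_flips :: "nat \<Rightarrow> (nat \<Rightarrow> bool) set" where
  "sign_flips D = (\<lambda>S i. i \<in> S) ` Pow {..<D}"

lemma card_sign_flips: "card (sign_flips D) = 2 ^ D"
proof -
  have "inj_on (\<lambda>S i. i \<in> S) (Pow {..<D})"
    by (rule inj_onI) (metis Collect_mem_eq)
  then show ?thesis by (simp add: sign_flips_def card_image card_Pow)
qed

lemma act_id: "act id (\<lambda>_. False) x = x"
  by (cases x) (simp add: act_def case_prod_unfold)

lemma act_comp: "act p e (act q f x) = act (p \<circ> q) (\<lambda>i. f i \<noteq> e (q i)) x"
  by (cases x) (auto simp add: act_def case_prod_unfold)

lemma coords_act: "coords (act p e x) = p ` coords x"
  by (cases x) (force simp add: act_def coords_def case_prod_unfold image_image)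

lemma act_agree_on_coords:
  assumes eq: "act p e x = act q f x" and i: "i \<in> coords x"
  shows "p i = q i \<and> e i = f i"
proof -
  obtain sg where sg: "(i, sg) \<in> set (snd x)" using i unfolding coords_def by force
  have "map (\<lambda>(i, sg). (p i, sg \<noteq> e i)) (snd x) = map (\<lambda>(i, sg). (q i, sg \<noteq> f i)) (snd x)"
    using eq by (simp add: act_def)
  then have "(\<lambda>(i, sg). (p i, sg \<noteq> e i)) (i, sg) = (\<lambda>(i, sg). (q i, sg \<noteq> f i)) (i, sg)"
    using sg unfolding map_eq_conv by blast
  then show ?thesis by auto
qed

lemma act_inj:
  assumes cx: "coords x = {..<D}"
  shows "inj_on (\<lambda>(p, e). act p e x) ({p. p permutes {..<D}} \<times> sign_flips D)"
proof (rule inj_onI, clarify)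
  fix p e q f
  assume p: "p permutes {..<D}" and e: "e \<in> sign_flips D"
    and q: "q permutes {..<D}" and f: "f \<in> sign_flips D"
    and eq: "act p e x = act q f x"
  have inside: "p i = q i \<and> e i = f i" if "i < D" for i
    using act_agree_on_coords[OF eq] cx that by blast
  have outside: "p i = q i \<and> e i = f i" if "\<not> i < D" for i
    using p q e f that by (auto simp: permutes_def sign_flips_def)
  show "p = q \<and> e = f"
  proof (intro conjI ext)
    fix i
    show "p i = q i" and "e i = f i"
      using inside[of i] outside[of i] by blast+
  qed
qed

lemma equiv_sperm:
  assumes closed: "\<forall>x\<in>A. \<forall>p e. p permutes {..<D} \<longrightarrow> act p e x \<in> A"
  shows "equiv A (sperm_rel D A)"
proof (rule equivI)
  show "refl_on A (sperm_rel D A)"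
    unfolding refl_on_def sperm_rel_def
    by (auto intro!: exI[of _ id] exI[of _ "\<lambda>_. False"] simp: act_id permutes_id)
  show "sym (sperm_rel D A)"
  proof (rule symI)
    fix x y assume "(x, y) \<in> sperm_rel D A"
    then obtain p e where xy: "x \<in> A" "y \<in> A" "p permutes {..<D}" "y = act p e x"
      unfolding sperm_rel_def by auto
    have "act (inv p) (\<lambda>i. e (inv p i)) y = act (inv p \<circ> p) (\<lambda>i. e i \<noteq> e (inv p (p i))) x"
      using xy(4) by (simp add: act_comp)
    also have "\<dots> = x"
      using permutes_inverses(2)[OF xy(3)] permutes_inv_o(2)[OF xy(3)] by (simp add: act_id)
    finally show "(y, x) \<in> sperm_rel D A"
      using xy permutes_inv[OF xy(3)] unfolding sperm_rel_def by blast
  qed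
  show "trans (sperm_rel D A)"
  proof (rule transI)
    fix x y z assume "(x, y) \<in> sperm_rel D A" "(y, z) \<in> sperm_rel D A"
    then obtain p e q f where h: "x \<in> A" "z \<in> A" "p permutes {..<D}" "y = act p e x"
       "q permutes {..<D}" "z = act q f y"
      unfolding sperm_rel_def by auto
    then show "(x, z) \<in> sperm_rel D A"
      unfolding sperm_rel_def using permutes_compose[OF h(3) h(5)]
      by (auto simp: act_comp)
  qed
qed (auto simp: sperm_rel_def)

lemma card_eq_sum_classes:
  assumes fin: "finite A" and eqv: "equiv A r"
  shows "card A = (\<Sum>X\<in>A // r. card X)"
proof -
  have "card A = card (\<Union>(A // r))" by (simp add: Union_quotient[OF eqv])
  also have "\<dots> = (\<Sum>X\<in>A // r. card X)"
  proof (rule card_Union_disjoint)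
    show "pairwise disjnt (A // r)"
      unfolding pairwise_def disjnt_def using quotient_disj[OF eqv] by blast
    show "\<And>X. X \<in> A // r \<Longrightarrow> finite X"
      by (rule finite_equiv_class[OF fin equiv_type[OF eqv]])
  qed
  finally show ?thesis .
qed

text \<open>Orbit counting: every class has at least 2^D D! elements, since the orbit of any
  member is contained in its class and the action is free.\<close>
lemma classes_bound:
  fixes A :: "'g lgraph set"
  assumes fin: "finite A" and coordsA: "\<forall>x\<in>A. coords x = {..<D}"
    and closed: "\<forall>x\<in>A. \<forall>p e. p permutes {..<D} \<longrightarrow> act p e x \<in> A"
  shows "card (A // sperm_rel D A) * (2 ^ D * fact D) \<le> card A"
proof -
  let ?R = "sperm_rel D A"
  let ?G = "{p. p permutes {..<D}} \<times> sign_flips D"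
  have eqv: "equiv A ?R" by (rule equiv_sperm[OF closed])
  have card_G: "card ?G = 2 ^ D * fact D"
    by (simp add: card_cartesian_product card_sign_flips card_permutations)
  have class_big: "2 ^ D * fact D \<le> card X" if X: "X \<in> A // ?R" for X
  proof -
    obtain x where x: "x \<in> A" and Xx: "X = ?R `` {x}" using X by (rule quotientE)
    have orbit: "(\<lambda>(p, e). act p e x) ` ?G \<subseteq> X"
      using x closed unfolding Xx sperm_rel_def by auto
    have "finite X" using fin unfolding Xx sperm_rel_def by (auto intro: finite_subset)
    moreover have "card ((\<lambda>(p, e). act p e x) ` ?G) = card ?G"
      using act_inj[of x D] coordsA x by (simp add: card_image)
    ultimately show ?thesis using card_mono[OF _ orbit] card_G by metis
  qed
  have "card (A // ?R) * (2 ^ D * fact D) = (\<Sum>X\<in>A // ?R. 2 ^ D * fact D)"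
    by simp
  also have "\<dots> \<le> (\<Sum>X\<in>A // ?R. card X)"
    by (rule sum_mono) (rule class_big)
  also have "\<dots> = card A"
    using card_eq_sum_classes[OF fin eqv] by simp
  finally show ?thesis .
qed

lemma lace_f_bound:
  fixes LG :: "nat \<Rightarrow> nat \<Rightarrow> 'g lgraph set"
  assumes symm: "\<And>p e x. bij p \<Longrightarrow> x \<in> LG a N \<Longrightarrow> act p e x \<in> LG a N"
    and fin: "finite {x \<in> LG a N. coords x = {..<D}}"
  shows "lace_f LG a N D * (2 ^ D * fact D) \<le> card {x \<in> LG a N. coords x = {..<D}}"
proof -
  let ?A = "{x \<in> LG a N. coords x = {..<D}}"
  have "\<forall>x\<in>?A. \<forall>p e. p permutes {..<D} \<longrightarrow> act p e x \<in> ?A"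
  proof (intro ballI allI impI)
    fix x p e assume "x \<in> ?A" and p: "p permutes {..<D}"
    then show "act p e x \<in> ?A"
      using symm[OF permutes_bij[OF p]] permutes_image[OF p] by (simp add: coords_act)
  qed
  with fin have "card (?A // sperm_rel D ?A) * (2 ^ D * fact D) \<le> card ?A"
    by (intro classes_bound) auto
  then show ?thesis unfolding lace_f_def Let_def .
qed

lemma lace_f_sum_bound:
  fixes LG :: "nat \<Rightarrow> nat \<Rightarrow> 'g lgraph set"
  assumes symm: "\<And>N p e x. bij p \<Longrightarrow> x \<in> LG a N \<Longrightarrow> act p e x \<in> LG a N"
    and count: "finite {(N, x). 1 \<le> N \<and> x \<in> LG a N \<and> coords x \<subseteq> {..<D}}
        \<and> card {(N, x). 1 \<le> N \<and> x \<in> LG a N \<and> coords x \<subseteq> {..<D}} \<le> (2 * D) ^ a"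
    and S_pos: "\<forall>N\<in>S. 1 \<le> N"
  shows "(\<Sum>N\<in>S. lace_f LG a N D) * (2 ^ D * fact D) \<le> (2 * D) ^ a"
proof (cases "finite S")
  case True
  define W where "W = {(N, x). 1 \<le> N \<and> x \<in> LG a N \<and> coords x \<subseteq> {..<D}}"
  define A where "A N = {x \<in> LG a N. coords x = {..<D}}" for N
  have sigma_sub: "(SIGMA N:S. A N) \<subseteq> W" using S_pos unfolding A_def W_def by auto
  have finW: "finite W" using count unfolding W_def by simp
  have finA: "finite (A N)" if "N \<in> S" for N
  proof (rule finite_subset)
    show "A N \<subseteq> snd ` W" using sigma_sub that by force
  qed (use finW in simp)
  have "(\<Sum>N\<in>S. lace_f LG a N D) * (2 ^ D * fact D) = (\<Sum>N\<in>S. lace_f LG a N D * (2 ^ D * fact D))"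
    by (simp add: sum_distrib_right)
  also have "\<dots> \<le> (\<Sum>N\<in>S. card (A N))"
  proof (rule sum_mono)
    fix N assume "N \<in> S"
    then show "lace_f LG a N D * (2 ^ D * fact D) \<le> card (A N)"
      using finA[of N] symm[where N = N] unfolding A_def by (intro lace_f_bound) auto
  qed
  also have "\<dots> = card (SIGMA N:S. A N)" using True finA by simp
  also have "\<dots> \<le> card W" by (rule card_mono[OF finW sigma_sub])
  also have "\<dots> \<le> (2 * D) ^ a" using count unfolding W_def by simp
  finally show ?thesis .
qed simp

section \<open>The polynomial x(x-2)...(x-2D+2)\<close>

abbreviation falling2 :: "nat \<Rightarrow> int poly" where
  "falling2 D \<equiv> \<Prod>j<D. [:- 2 * of_nat j, 1:]"

lemma falling2_Suc: "falling2 (Suc D) = smult (- 2 * int D) (falling2 D) + pCons 0 (falling2 D)"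
  by (simp add: mult_pCons_left mult.commute)

lemma degree_falling2: "degree (falling2 D) \<le> D"
  by (rule order.trans[OF degree_prod_sum_le]) auto

text \<open>In the induction step the
  recurrence [x^(k+1)] Q_(D+1) = -2D [x^(k+1)] Q_D + [x^k] Q_D is combined with Pascal's rule;
  for k >= D the first term vanishes together with (D choose k+1).\<close>
lemma coeff_falling2_bound:
  "\<bar>coeff (falling2 D) m\<bar> \<le> int (D choose m) * (2 * int D) ^ (D - m)"
proof (induction D arbitrary: m)
  case 0
  then show ?case by (cases m) auto
next
  case (Suc D)
  show ?case
  proof (cases m)
    case 0
    have "\<bar>coeff (falling2 (Suc D)) m\<bar> = 2 * int D * \<bar>coeff (falling2 D) 0\<bar>"
      using 0 by (simp add: falling2_Suc abs_mult)
    also have "\<dots> \<le> 2 * int D * (2 * int D) ^ D"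
      using Suc.IH[of 0] by (intro mult_left_mono) auto
    also have "\<dots> \<le> (2 * int (Suc D)) ^ Suc D"
      by (simp del: of_nat_Suc) (intro mult_mono power_mono; simp)
    finally show ?thesis using 0 by simp
  next
    case (Suc k)
    have shift: "2 * int D * (int (D choose Suc k) * (2 * int D) ^ (D - Suc k))
        = int (D choose Suc k) * (2 * int D) ^ (D - k)"
    proof (cases "k < D")
      case True
      then have "D - k = Suc (D - Suc k)" by simp
      then show ?thesis by (simp add: algebra_simps)
    qed simp
    have "\<bar>coeff (falling2 (Suc D)) m\<bar>
        \<le> 2 * int D * \<bar>coeff (falling2 D) (Suc k)\<bar> + \<bar>coeff (falling2 D) k\<bar>"
      using Suc abs_triangle_ineq[of "- 2 * int D * coeff (falling2 D) (Suc k)" "coeff (falling2 D) k"]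
      by (simp add: falling2_Suc abs_mult)
    also have "\<dots> \<le> 2 * int D * (int (D choose Suc k) * (2 * int D) ^ (D - Suc k))
        + int (D choose k) * (2 * int D) ^ (D - k)"
      by (intro add_mono mult_left_mono Suc.IH) auto
    also have "\<dots> = int (Suc D choose Suc k) * (2 * int D) ^ (D - k)"
      by (simp only: shift) (simp add: algebra_simps)
    also have "\<dots> \<le> int (Suc D choose Suc k) * (2 * int (Suc D)) ^ (D - k)"
      by (intro mult_left_mono power_mono) auto
    finally show ?thesis using Suc by simp
  qed
qed

section \<open>Real-number estimates\<close>

text \<open>A crude Stirling bound, from the single term n^n/n! of the series of e^n.\<close>
lemma pow_le_exp_fact: "real n ^ n \<le> exp (real n) * fact n"
proof -
  have s: "summable (\<lambda>k. real n ^ k /\<^sub>R fact k)"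
    using exp_converges[of "real n"] sums_summable by blast
  have "(\<Sum>k\<in>{n}. real n ^ k /\<^sub>R fact k) \<le> (\<Sum>k. real n ^ k /\<^sub>R fact k)"
    by (rule sum_le_suminf[OF s]) auto
  also have "\<dots> = exp (real n)" using exp_converges[of "real n"] sums_unique by metis
  finally have "real n ^ n / fact n \<le> exp (real n)" by (simp add: divide_inverse mult.commute)
  then show ?thesis by (simp add: divide_le_eq mult.commute)
qed

text \<open>For D <= b:  (2D)^(D+b) = 2^(D+b) D^D D^b <= 4^b (e^b D!) (e^b b!).\<close>
lemma power_le_exp_fact_prod:
  assumes Db: "D \<le> b"
  shows "(2 * real D) ^ (D + b) \<le> (4 * exp 1 ^ 2) ^ b * fact b * fact D"
proof -
  have two: "(2::real) ^ (D + b) \<le> 4 ^ b"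
    using power_increasing[of "D + b" "2 * b" "2::real"] Db by (simp add: power_mult)
  have "exp (real D) * fact D \<le> exp (real b) * fact D"
    using Db by (intro mult_right_mono) simp_all
  then have DD: "real D ^ D \<le> exp (real b) * fact D"
    using pow_le_exp_fact[of D] by linarith
  have Db_pow: "real D ^ b \<le> exp (real b) * fact b"
    using pow_le_exp_fact[of b] power_mono[of "real D" "real b" b] Db by simp
  have "(2 * real D) ^ (D + b) = 2 ^ (D + b) * (real D ^ D * real D ^ b)"
    by (simp add: power_mult_distrib power_add)
  also have "\<dots> \<le> 4 ^ b * ((exp (real b) * fact D) * (exp (real b) * fact b))"
    using two DD Db_pow by (intro mult_mono) auto
  also have "\<dots> = (4 * exp 1 ^ 2) ^ b * fact b * fact D"
  proof -
    have "exp (real b) = exp 1 ^ b" using exp_of_nat_mult[of b 1] by simp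
    then show ?thesis by (simp add: power_mult_distrib power2_eq_square mult_ac)
  qed
  finally show ?thesis .
qed

text \<open>The weight of a single dimension D in c_{a,b,N}: the coefficient of x^(a-b) in Q_D
  times the maximal number (2D)^a / (2^D D!) of classes.\<close>
lemma coeff_weight_bound:
  assumes Db: "D \<le> b" and ba: "b \<le> a"
  shows "real_of_int \<bar>coeff (falling2 D) (a - b)\<bar> * (2 * real D) ^ a / (2 ^ D * fact D)
      \<le> (4 * exp 1 ^ 2) ^ b * fact b"
proof (cases "a - b \<le> D")
  case True
  have "real_of_int \<bar>coeff (falling2 D) (a - b)\<bar>
      \<le> real_of_int (int (D choose (a - b)) * (2 * int D) ^ (D - (a - b)))"
    using coeff_falling2_bound[of D "a - b"] by (simp only: of_int_le_iff)
  also have "\<dots> \<le> 2 ^ D * (2 * real D) ^ (D - (a - b))"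
  proof -
    have "real (D choose (a - b)) \<le> 2 ^ D"
      using binomial_le_pow2[of D "a - b"] by (metis of_nat_le_iff of_nat_numeral of_nat_power)
    then show ?thesis by (simp add: mult_right_mono)
  qed
  finally have c: "real_of_int \<bar>coeff (falling2 D) (a - b)\<bar> \<le> 2 ^ D * (2 * real D) ^ (D - (a - b))" .
  have e: "D - (a - b) + a = D + b" using True ba by simp
  have "real_of_int \<bar>coeff (falling2 D) (a - b)\<bar> * (2 * real D) ^ a
      \<le> 2 ^ D * (2 * real D) ^ (D - (a - b)) * (2 * real D) ^ a"
    by (rule mult_right_mono[OF c]) simp
  also have "\<dots> = 2 ^ D * (2 * real D) ^ (D + b)"
    by (simp only: mult.assoc e flip: power_add)
  also have "\<dots> \<le> 2 ^ D * ((4 * exp 1 ^ 2) ^ b * fact b * fact D)"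
    using power_le_exp_fact_prod[OF Db] by simp
  finally show ?thesis by (simp add: divide_le_eq mult_ac)
next
  case False
  then have "coeff (falling2 D) (a - b) = 0"
    using degree_falling2[of D] by (intro coeff_eq_0) auto
  then show ?thesis by simp
qed

lemma lace_c_abs_le:
  "real_of_int \<bar>lace_c LG a b N\<bar>
     \<le> (\<Sum>D\<in>{1..a div 2}. real (lace_f LG a N D) * real_of_int \<bar>coeff (falling2 D) (a - b)\<bar>)"
proof -
  have "lace_c LG a b N = (\<Sum>D\<in>{1..a div 2}. int (lace_f LG a N D) * coeff (falling2 D) (a - b))"
    unfolding lace_c_def by (simp add: coeff_sum of_nat_poly)
  then have "\<bar>lace_c LG a b N\<bar> \<le> (\<Sum>D\<in>{1..a div 2}. int (lace_f LG a N D) * \<bar>coeff (falling2 D) (a - b)\<bar>)"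
    using sum_abs[of "\<lambda>D. int (lace_f LG a N D) * coeff (falling2 D) (a - b)" "{1..a div 2}"]
    by (simp add: abs_mult)
  then have "real_of_int \<bar>lace_c LG a b N\<bar>
      \<le> real_of_int (\<Sum>D\<in>{1..a div 2}. int (lace_f LG a N D) * \<bar>coeff (falling2 D) (a - b)\<bar>)"
    by (simp only: of_int_le_iff)
  then show ?thesis by simp
qed

text \<open>The signed sum over types
  is bounded by the sum of absolute values; exchanging the sums over N and D, each dimension
  contributes at most (4e^2)^b b!, and there are a div 2 <= b dimensions.\<close>
lemma lace_cab_bound:
  fixes LG :: "nat \<Rightarrow> nat \<Rightarrow> 'g lgraph set"
  assumes symm: "\<And>N p e x. bij p \<Longrightarrow> x \<in> LG a N \<Longrightarrow> act p e x \<in> LG a N"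
    and count: "\<And>D. finite {(N, x). 1 \<le> N \<and> x \<in> LG a N \<and> coords x \<subseteq> {..<D}}
        \<and> card {(N, x). 1 \<le> N \<and> x \<in> LG a N \<and> coords x \<subseteq> {..<D}} \<le> (2 * D) ^ a"
    and ab: "b < a" "a \<le> 2 * b"
  shows "real_of_int \<bar>lace_cab LG a b\<bar> \<le> real b * ((4 * exp 1 ^ 2) ^ b * fact b)"
proof -
  define S where "S = {N. 1 \<le> N \<and> lace_c LG a b N \<noteq> 0}"
  have half: "a div 2 \<le> b" using ab(2) by presburger
  define w where "w D = real_of_int \<bar>coeff (falling2 D) (a - b)\<bar>" for D
  have classes: "real (\<Sum>N\<in>S. lace_f LG a N D) \<le> (2 * real D) ^ a / (2 ^ D * fact D)" for D
  proof -
    have "real ((\<Sum>N\<in>S. lace_f LG a N D) * (2 ^ D * fact D)) \<le> real ((2 * D) ^ a)"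
      using lace_f_sum_bound[where LG = LG and a = a, OF symm count] unfolding S_def of_nat_le_iff by simp
    then show ?thesis by (simp add: pos_le_divide_eq)
  qed
  have "\<bar>lace_cab LG a b\<bar> \<le> (\<Sum>N\<in>S. \<bar>lace_c LG a b N\<bar>)"
    using sum_abs[of "\<lambda>N. (-1) ^ (N + 1) * lace_c LG a b N" S]
    unfolding lace_cab_def S_def[symmetric] by (simp add: abs_mult)
  then have "real_of_int \<bar>lace_cab LG a b\<bar> \<le> (\<Sum>N\<in>S. real_of_int \<bar>lace_c LG a b N\<bar>)"
    by (metis of_int_le_iff of_int_sum)
  also have "\<dots> \<le> (\<Sum>N\<in>S. \<Sum>D\<in>{1..a div 2}. real (lace_f LG a N D) * w D)"
    unfolding w_def by (intro sum_mono lace_c_abs_le)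
  also have "\<dots> = (\<Sum>D\<in>{1..a div 2}. w D * real (\<Sum>N\<in>S. lace_f LG a N D))"
    by (subst sum.swap) (simp add: sum_distrib_left mult.commute)
  also have "\<dots> \<le> (\<Sum>D\<in>{1..a div 2}. (4 * exp 1 ^ 2) ^ b * fact b)"
  proof (rule sum_mono)
    fix D assume "D \<in> {1..a div 2}"
    then have Db: "D \<le> b" using half by simp
    have "w D * real (\<Sum>N\<in>S. lace_f LG a N D) \<le> w D * ((2 * real D) ^ a / (2 ^ D * fact D))"
      using classes by (intro mult_left_mono) (simp_all add: w_def)
    also have "\<dots> \<le> (4 * exp 1 ^ 2) ^ b * fact b"
      using coeff_weight_bound[OF Db] ab unfolding w_def by simp
    finally show "w D * real (\<Sum>N\<in>S. lace_f LG a N D) \<le> (4 * exp 1 ^ 2) ^ b * fact b" .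
  qed
  also have "\<dots> = real (a div 2) * ((4 * exp 1 ^ 2) ^ b * fact b)"
    by simp
  also have "\<dots> \<le> real b * ((4 * exp 1 ^ 2) ^ b * fact b)"
    using half by (intro mult_right_mono) simp_all
  finally show ?thesis .
qed

text \<open>The polynomial factor b^2 coming from the two sums is absorbed into the exponential.\<close>
lemma square_le_four_pow: "real b * real b \<le> 4 ^ b"
proof -
  have "real b \<le> 2 ^ b"
    using less_exp[of b] by (metis less_imp_le of_nat_le_iff of_nat_numeral of_nat_power)
  then have "real b * real b \<le> 2 ^ b * 2 ^ b" by (intro mult_mono) auto
  also have "\<dots> = 4 ^ b" by (simp flip: power_mult_distrib)
  finally show ?thesis .
qed

theorem lemma4:
  fixes LG :: "nat \<Rightarrow> nat \<Rightarrow> 'g lgraph set"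
  assumes walk_len: "\<And>a N x. x \<in> LG a N \<Longrightarrow> length (snd x) = a"
    and symm_inv: "\<And>a N p e x. bij p \<Longrightarrow> x \<in> LG a N \<Longrightarrow> act p e x \<in> LG a N"
    and count_bound: "\<And>a D. finite {(N, x). 1 \<le> N \<and> x \<in> LG a N \<and> coords x \<subseteq> {..<D}}
        \<and> card {(N, x). 1 \<le> N \<and> x \<in> LG a N \<and> coords x \<subseteq> {..<D}} \<le> (2 * D) ^ a"
    and dim_len: "\<And>a N x. x \<in> LG a N \<Longrightarrow> 2 * dimensionality x \<le> a"
  shows "\<exists>C::real. \<forall>b\<ge>1.
           real_of_int (\<Sum>a\<in>{b+1..2*b}. \<bar>lace_cab LG a b\<bar>) \<le> C ^ b * fact b"
proof -
  define K :: real where "K = 4 * exp 1 ^ 2"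
  have cab: "real_of_int \<bar>lace_cab LG a b\<bar> \<le> real b * (K ^ b * fact b)"
    if "b < a" "a \<le> 2 * b" for a b
    using lace_cab_bound[where LG = LG and a = a, OF symm_inv count_bound that]
    unfolding K_def .
  have "real_of_int (\<Sum>a\<in>{b+1..2*b}. \<bar>lace_cab LG a b\<bar>) \<le> (4 * K) ^ b * fact b" for b
  proof -
    have "real_of_int (\<Sum>a\<in>{b+1..2*b}. \<bar>lace_cab LG a b\<bar>)
        = (\<Sum>a\<in>{b+1..2*b}. real_of_int \<bar>lace_cab LG a b\<bar>)" by simp
    also have "\<dots> \<le> (\<Sum>a\<in>{b+1..2*b}. real b * (K ^ b * fact b))"
      by (intro sum_mono cab) auto
    also have "\<dots> = real b * real b * (K ^ b * fact b)" by simp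
    also have "\<dots> \<le> 4 ^ b * (K ^ b * fact b)"
      by (intro mult_right_mono square_le_four_pow) (simp add: K_def)
    also have "\<dots> = (4 * K) ^ b * fact b" by (simp add: power_mult_distrib)
    finally show ?thesis .
  qed
  then show ?thesis by blast
qed

end
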